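(* Let $c>0$. For each $N\in\mathbb{N}$, let $\mathcal{H}_N$ be a Hilbert space of dimension $N$, and let $\mu_N$ be an $\mathcal{L}_+(\mathcal{H}_N)$-valued measure on $\mathbb{D}$ such that $\|\mu_N\|_{\mathcal{I}}=1$ and \[ \|\mathcal{P}\|_{H^2(\mathbb{T},\mathcal{H}_N)\to L^2(\mathbb{D},\mathcal{H}_N,d\mu_N)}\ge c(\log N)^{1/2}. \] Let $\mathcal{H}=\bigoplus_{N=1}^\infty\mathcal{H}_N$ and $\mu=\bigoplus_{N=1}^\infty\mu_N$ (the $\mathcal{L}_+(\mathcal{H})$-valued measure acting blockwise). Then $\|\mu\|_{\mathcal{I}}=1$, while $\mathcal{P}:H^2(\mathbb{T},\mathcal{H})\to L^2(\mathbb{D},\mathcal{H},d\mu)$ is unbounded.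
   Context: $\mathbb{D}$ is the open unit disc, $\mathbb{T}$ the unit circle. For a separable Hilbert space $\mathcal{H}$, $\mathcal{L}_+(\mathcal{H})$ is the set of positive bounded operators on $\mathcal{H}$. For an $\mathcal{L}_+(\mathcal{H})$-valued measure $\mu$ on $\mathbb{D}$, $L^2(\mathbb{D},\mathcal{H},d\mu)$ is the space of strongly measurable $f:\mathbb{D}\to\mathcal{H}$ with $\int_{\mathbb{D}}\langle d\mu\,f,f\rangle_{\mathcal{H}}<\infty$. $H^2(\mathbb{T},\mathcal{H})$ is the subspace of analytic functions in $L^2(\mathbb{T},\mathcal{H})$. For an arc $I\subset\mathbb{T}$ with normalized length $|I|$ ($|\mathbb{T}|=1$), $Q_I=\{w\in\mathbb{D}: w/|w|\in I,\ 1-|I|<|w|<1\}$, and $\|\mu\|_{\mathcal{I}}=\sup_{I\subset\mathbb{T},\ \|e\|_{\mathcal{H}}=1}\langle\mu(Q_I)e,e\rangle_{\mathcal{H}}$. The harmonic extension operator is $\mathcal{P}f(re^{2\pi ix})=\int_0^1 f(e^{2\pi it})P_r(x-t)\,dt$ with $P_r(t)=\frac{1-r^2}{1-2r\cos(2\pi t)+r^2}$. *)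

theory Defs
  imports "HOL-Analysis.Analysis"
begin

text \<open>Hilbert spaces are modelled as l2(J) for a countable index set J:
  vectors are functions J -> complex vanishing off J.  Operators are given
  by their matrices w.r.t. the canonical basis.\<close>

definition Dmeas :: "complex measure" where
  "Dmeas = restrict_space borel (ball 0 1)"

definition l2vec :: "'j set \<Rightarrow> ('j \<Rightarrow> complex) \<Rightarrow> bool" where
  "l2vec J x \<longleftrightarrow> (\<forall>j. j \<notin> J \<longrightarrow> x j = 0) \<and> (\<lambda>j. (cmod (x j))\<^sup>2) summable_on J"

definition l2normsq :: "'j set \<Rightarrow> ('j \<Rightarrow> complex) \<Rightarrow> real" where
  "l2normsq J x = (\<Sum>\<^sub>\<infinity>j\<in>J. (cmod (x j))\<^sup>2)"

definition qf_fin :: "('j \<Rightarrow> 'j \<Rightarrow> complex) \<Rightarrow> ('j \<Rightarrow> complex) \<Rightarrow> 'j set \<Rightarrow> complex" where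
  "qf_fin W x F = (\<Sum>i\<in>F. \<Sum>j\<in>F. cnj (x i) * W i j * x j)"

definition psd_mat :: "'j set \<Rightarrow> ('j \<Rightarrow> 'j \<Rightarrow> complex) \<Rightarrow> bool" where
  "psd_mat J W \<longleftrightarrow> (\<forall>i j. (i \<notin> J \<or> j \<notin> J) \<longrightarrow> W i j = 0) \<and>
     (\<forall>x F. finite F \<and> F \<subseteq> J \<longrightarrow> qf_fin W x F \<in> \<real> \<and> 0 \<le> Re (qf_fin W x F))"

definition bounded_psd :: "'j set \<Rightarrow> ('j \<Rightarrow> 'j \<Rightarrow> complex) \<Rightarrow> bool" where
  "bounded_psd J W \<longleftrightarrow> psd_mat J W \<and>
     (\<exists>C. \<forall>x F. finite F \<and> F \<subseteq> J \<longrightarrow> Re (qf_fin W x F) \<le> C * (\<Sum>j\<in>F. (cmod (x j))\<^sup>2))"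

text \<open>The quadratic form <W x, x> for x in l2(J) (limit over finite coordinate sets;
  taken as a liminf in [0,\<infinity>] so that it is always defined).\<close>
definition qform :: "'j set \<Rightarrow> ('j \<Rightarrow> 'j \<Rightarrow> complex) \<Rightarrow> ('j \<Rightarrow> complex) \<Rightarrow> ennreal" where
  "qform J W x = Liminf (finite_subsets_at_top J) (\<lambda>F. ennreal (Re (qf_fin W x F)))"

text \<open>An L_+(l2(J))-valued measure on the Borel sets of the unit disc
  (values are bounded positive operators; weakly countably additive).\<close>
definition is_opmeasure :: "'j set \<Rightarrow> (complex set \<Rightarrow> 'j \<Rightarrow> 'j \<Rightarrow> complex) \<Rightarrow> bool" where
  "is_opmeasure J M \<longleftrightarrow> (\<forall>A\<in>sets Dmeas. bounded_psd J (M A)) \<and>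
     (\<forall>x F. finite F \<and> F \<subseteq> J \<longrightarrow>
        countably_additive (sets Dmeas) (\<lambda>A. ennreal (Re (qf_fin (M A) x F))))"

definition opdensity :: "'j set \<Rightarrow> (complex set \<Rightarrow> 'j \<Rightarrow> 'j \<Rightarrow> complex)
     \<Rightarrow> complex measure \<Rightarrow> (complex \<Rightarrow> 'j \<Rightarrow> 'j \<Rightarrow> complex) \<Rightarrow> bool" where
  "opdensity J M \<nu> W \<longleftrightarrow> sets \<nu> = sets Dmeas \<and> finite_measure \<nu> \<and>
     (\<forall>z\<in>space \<nu>. psd_mat J (W z)) \<and>
     (\<forall>i j. integrable \<nu> (\<lambda>z. W z i j)) \<and>
     (\<forall>A\<in>sets Dmeas. \<forall>i j. M A i j = (LINT z:A|\<nu>. W z i j))"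

text \<open>\<integral> <d\<mu> g, g> for g : D -> l2(J) (coordinatewise measurable = strongly
  measurable, J countable).  Defined through a density representation.\<close>
definition opL2 :: "'j set \<Rightarrow> (complex set \<Rightarrow> 'j \<Rightarrow> 'j \<Rightarrow> complex)
     \<Rightarrow> (complex \<Rightarrow> 'j \<Rightarrow> complex) \<Rightarrow> ennreal" where
  "opL2 J M g = (THE q. \<forall>\<nu> W. opdensity J M \<nu> W \<longrightarrow>
       q = (\<integral>\<^sup>+ z. qform J (W z) (g z) \<partial>\<nu>))"

text \<open>H^2(T, l2(J)); a function on T is written as t \<mapsto> f(e^{2\<pi> i t}), t \<in> [0,1].\<close>
definition H2 :: "'j set \<Rightarrow> (real \<Rightarrow> 'j \<Rightarrow> complex) \<Rightarrow> bool" where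
  "H2 J f \<longleftrightarrow> (\<forall>j. (\<lambda>t. f t j) \<in> borel_measurable (restrict_space lborel {0..1})) \<and>
     (\<forall>t j. j \<notin> J \<longrightarrow> f t j = 0) \<and>
     (\<integral>\<^sup>+ t. (\<Sum>\<^sub>\<infinity>j\<in>J. ennreal ((cmod (f t j))\<^sup>2)) \<partial>(restrict_space lborel {0..1})) < \<infinity> \<and>
     (\<forall>n::int. n < 0 \<longrightarrow> (\<forall>j.
        (LINT t:{0..1}|lborel. f t j * exp (- 2 * pi * \<i> * of_int n * of_real t)) = 0))"

definition H2normsq :: "'j set \<Rightarrow> (real \<Rightarrow> 'j \<Rightarrow> complex) \<Rightarrow> ennreal" where
  "H2normsq J f = (\<integral>\<^sup>+ t. (\<Sum>\<^sub>\<infinity>j\<in>J. ennreal ((cmod (f t j))\<^sup>2)) \<partial>(restrict_space lborel {0..1}))"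

definition Pker :: "real \<Rightarrow> real \<Rightarrow> real" where
  "Pker r t = (1 - r\<^sup>2) / (1 - 2 * r * cos (2 * pi * t) + r\<^sup>2)"

text \<open>Harmonic extension: w = r e^{2\<pi> i x} with r = |w|, x = Arg w / (2\<pi>).\<close>
definition Pext :: "(real \<Rightarrow> 'j \<Rightarrow> complex) \<Rightarrow> complex \<Rightarrow> 'j \<Rightarrow> complex" where
  "Pext f w j = (LINT t:{0..1}|lborel. of_real (Pker (cmod w) (Arg w / (2 * pi) - t)) * f t j)"

text \<open>Arcs I of T: images t \<mapsto> e^{2\<pi> i t} of bounded nonempty intervals S of length \<le> 1;
  |I| = length of S.\<close>
definition arc_param :: "real set \<Rightarrow> bool" where
  "arc_param S \<longleftrightarrow> is_interval S \<and> S \<noteq> {} \<and> bdd_above S \<and> bdd_below S \<and> Sup S - Inf S \<le> 1"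

definition Qbox :: "real set \<Rightarrow> complex set" where
  "Qbox S = {w. cmod w < 1 \<and> 1 - (Sup S - Inf S) < cmod w \<and>
               (\<exists>s\<in>S. w / of_real (cmod w) = exp (2 * pi * \<i> * of_real s))}"

definition Inorm :: "'j set \<Rightarrow> (complex set \<Rightarrow> 'j \<Rightarrow> 'j \<Rightarrow> complex) \<Rightarrow> ennreal" where
  "Inorm J M = (SUP S \<in> Collect arc_param. SUP e \<in> {e. l2vec J e \<and> l2normsq J e = 1}.
                  qform J (M (Qbox S)) e)"

text \<open>Direct sum H = \<Oplus>_{N\<ge>1} C^N, indexed by pairs (N,i), i < N, and the
  blockwise direct sum of the measures.\<close>
definition Jsum :: "(nat \<times> nat) set" where
  "Jsum = {(N, i). 1 \<le> N \<and> i < N}"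

definition dsum_meas :: "(nat \<Rightarrow> complex set \<Rightarrow> nat \<Rightarrow> nat \<Rightarrow> complex)
     \<Rightarrow> complex set \<Rightarrow> nat \<times> nat \<Rightarrow> nat \<times> nat \<Rightarrow> complex" where
  "dsum_meas \<mu> A p q = (if p \<in> Jsum \<and> q \<in> Jsum \<and> fst p = fst q
                         then \<mu> (fst p) A (snd p) (snd q) else 0)"

end

theory Submission
  imports Defs
begin

text \<open>Restricted to finitely many coordinates, the quadratic form of the direct sum
  measure splits into the quadratic forms of the blocks.  Hence the Carleson
  quantity of the sum is the supremum of those of the blocks, which are all 1.
  Conversely, a function of \<open>H\<^sup>2(\<T>, \<complex>\<^sup>N)\<close> placed into the \<open>N\<close>-th block keeps its
  norm, and so does its harmonic extension in \<open>L\<^sup>2(\<mu>)\<close>.  A bound \<open>C\<close> for the sum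
  would therefore bound every block by \<open>C\<close>, against the growth \<open>c (log N)\<^sup>1\<^sup>/\<^sup>2\<close>.

  The integral \<open>\<integral>\<langle>d\<mu> g, g\<rangle>\<close> is defined through a density representation, so
  representations have to be produced (blockwise ones are glued over a weighted
  sum of the block measures) and shown not to affect the value (two of them have
  densities with respect to a common dominating measure, by Radon--Nikodym).\<close>

lemma qf_fin_cong:
  assumes "\<And>p q. p \<in> B \<Longrightarrow> q \<in> B \<Longrightarrow> W p q = W' p q" and "\<And>p. p \<in> B \<Longrightarrow> x p = x' p"
  shows "qf_fin W x B = qf_fin W' x' B"
  unfolding qf_fin_def using assms by (intro sum.cong refl) auto

lemma qf_fin_scale:
  "qf_fin (\<lambda>p q. complex_of_real c * W p q) x B = complex_of_real c * qf_fin W x B"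
  unfolding qf_fin_def by (simp add: sum_distrib_left algebra_simps)

lemma qf_fin_Pair_image:
  "qf_fin W x (Pair N ` F) = qf_fin (\<lambda>i j. W (N, i) (N, j)) (\<lambda>i. x (N, i)) F"
  unfolding qf_fin_def by (simp add: sum.reindex inj_on_def)

lemma qf_fin_superset:
  assumes "finite F" "B \<subseteq> F" "\<And>p. p \<notin> B \<Longrightarrow> x p = 0"
  shows "qf_fin W x F = qf_fin W x B"
proof -
  have "finite B" using assms finite_subset by blast
  have "qf_fin W x F = (\<Sum>i\<in>B. \<Sum>j\<in>F. cnj (x i) * W i j * x j)"
    unfolding qf_fin_def using assms by (intro sum.mono_neutral_right) auto
  also have "\<dots> = qf_fin W x B"
    unfolding qf_fin_def using assms \<open>finite B\<close> by (intro sum.cong refl sum.mono_neutral_right) auto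
  finally show ?thesis .
qed

lemma qform_eq_qf_fin:
  assumes "finite B" "B \<subseteq> J" "\<And>p. p \<notin> B \<Longrightarrow> x p = 0"
  shows "qform J W x = ennreal (Re (qf_fin W x B))"
proof -
  have "eventually (\<lambda>F. ennreal (Re (qf_fin W x F)) = ennreal (Re (qf_fin W x B)))
          (finite_subsets_at_top J)"
    unfolding eventually_finite_subsets_at_top using assms
    by (intro exI[of _ B]) (auto simp: qf_fin_superset)
  then show ?thesis
    unfolding qform_def by (subst Liminf_eq, assumption) (simp add: Liminf_const)
qed

lemma qform_le:
  assumes "\<And>F. finite F \<Longrightarrow> F \<subseteq> J \<Longrightarrow> Re (qf_fin W x F) \<le> b"
  shows "qform J W x \<le> ennreal b"
proof -
  have "eventually (\<lambda>F. ennreal (Re (qf_fin W x F)) \<le> ennreal b) (finite_subsets_at_top J)"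
    using assms by (intro eventually_finite_subsets_at_top_weakI ennreal_leI) auto
  then have "Limsup (finite_subsets_at_top J) (\<lambda>F. ennreal (Re (qf_fin W x F))) \<le> ennreal b"
    by (rule Limsup_bounded)
  then show ?thesis
    unfolding qform_def using Liminf_le_Limsup[of "finite_subsets_at_top J"] order_trans by fastforce
qed

lemma qf_fin_measurable:
  assumes "\<And>p q. (\<lambda>z. W z p q) \<in> borel_measurable L" and "\<And>p. (\<lambda>z. g z p) \<in> borel_measurable L"
  shows "(\<lambda>z. ennreal (Re (qf_fin (W z) (g z) B))) \<in> borel_measurable L"
proof -
  have "(\<lambda>x. cnj x) \<in> borel_measurable borel"
    by (intro borel_measurable_continuous_onI continuous_intros)
  then have "(\<lambda>z. cnj (g z i) * W z i j * g z j) \<in> borel_measurable L" for i j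
    by (intro borel_measurable_times measurable_compose[OF assms(2)] assms)
  then have "(\<lambda>z. qf_fin (W z) (g z) B) \<in> borel_measurable L"
    unfolding qf_fin_def by (intro borel_measurable_sum)
  then show ?thesis by measurable
qed

definition block_embed :: "nat \<Rightarrow> (nat \<Rightarrow> 'a::zero) \<Rightarrow> nat \<times> nat \<Rightarrow> 'a" where
  "block_embed N x p = (if fst p = N \<and> snd p < N then x (snd p) else 0)"

lemma Pair_image_lessThan_subset_Jsum: "N \<ge> 1 \<Longrightarrow> Pair N ` {..<N} \<subseteq> Jsum"
  by (auto simp: Jsum_def)

lemma has_sum_block_embed:
  fixes h :: "'a::zero \<Rightarrow> 'b::{comm_monoid_add, topological_space}"
  assumes "N \<ge> 1" "h 0 = 0"
  shows "((\<lambda>p. h (block_embed N x p)) has_sum s) Jsum \<longleftrightarrow> ((\<lambda>i. h (x i)) has_sum s) {..<N}"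
proof -
  have "((\<lambda>p. h (block_embed N x p)) has_sum s) Jsum \<longleftrightarrow>
        ((\<lambda>p. h (block_embed N x p)) has_sum s) (Pair N ` {..<N})"
    using assms Pair_image_lessThan_subset_Jsum by (intro has_sum_cong_neutral) (auto simp: block_embed_def)
  also have "\<dots> \<longleftrightarrow> ((\<lambda>i. h (block_embed N x (N, i))) has_sum s) {..<N}"
    by (subst has_sum_reindex) (simp_all add: inj_on_def comp_def)
  also have "\<dots> \<longleftrightarrow> ((\<lambda>i. h (x i)) has_sum s) {..<N}"
    by (intro has_sum_cong) (simp add: block_embed_def)
  finally show ?thesis .
qed

lemma infsum_block_embed:
  fixes h :: "'a::zero \<Rightarrow> 'b::{comm_monoid_add, t2_space}"
  assumes "N \<ge> 1" "h 0 = 0"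
  shows "(\<Sum>\<^sub>\<infinity>p\<in>Jsum. h (block_embed N x p)) = (\<Sum>\<^sub>\<infinity>i\<in>{..<N}. h (x i))"
proof (cases "(\<lambda>i. h (x i)) summable_on {..<N}")
  case True
  then have "((\<lambda>p. h (block_embed N x p)) has_sum (\<Sum>\<^sub>\<infinity>i\<in>{..<N}. h (x i))) Jsum"
    using has_sum_block_embed[where h=h, OF assms] has_sum_infsum by blast
  then show ?thesis by (rule infsumI)
next
  case False
  then have "\<not> (\<lambda>p. h (block_embed N x p)) summable_on Jsum"
    using has_sum_block_embed[where h=h, OF assms] unfolding summable_on_def by blast
  with False show ?thesis by (simp add: infsum_not_exists)
qed

lemma finite_Pair_fiber: "finite F \<Longrightarrow> finite {i. (N, i) \<in> F}"
  by (rule finite_subset[of _ "snd ` F"]) force+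

lemma sum_over_fibers:
  assumes "finite F"
  shows "(\<Sum>p\<in>F. h p) = (\<Sum>N\<in>fst ` F. \<Sum>i\<in>{i. (N, i) \<in> F}. h (N, i))"
proof -
  have "F = (SIGMA N:fst ` F. {i. (N, i) \<in> F})" by force
  then have "(\<Sum>p\<in>F. h p) = (\<Sum>p\<in>(SIGMA N:fst ` F. {i. (N, i) \<in> F}). h p)" by simp
  also have "\<dots> = (\<Sum>N\<in>fst ` F. \<Sum>i\<in>{i. (N, i) \<in> F}. h (N, i))"
    using assms finite_Pair_fiber[OF assms] by (subst sum.Sigma) auto
  finally show ?thesis .
qed

lemma qf_fin_dsum_meas:
  assumes "finite F" "F \<subseteq> Jsum"
  shows "qf_fin (dsum_meas \<mu> A) e F = (\<Sum>N\<in>fst ` F. qf_fin (\<mu> N A) (\<lambda>i. e (N, i)) {i. (N, i) \<in> F})"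
proof -
  let ?G = "\<lambda>N. {i. (N, i) \<in> F}"
  have "qf_fin (dsum_meas \<mu> A) e F = (\<Sum>N\<in>fst ` F. \<Sum>i\<in>?G N. \<Sum>M\<in>fst ` F. \<Sum>j\<in>?G M.
          cnj (e (N, i)) * dsum_meas \<mu> A (N, i) (M, j) * e (M, j))"
    unfolding qf_fin_def by (simp only: sum_over_fibers[OF assms(1)])
  also have "\<dots> = (\<Sum>N\<in>fst ` F. \<Sum>i\<in>?G N. \<Sum>M\<in>fst ` F.
          if M = N then \<Sum>j\<in>?G N. cnj (e (N, i)) * \<mu> N A i j * e (N, j) else 0)"
  proof (intro sum.cong refl)
    fix N i M assume "N \<in> fst ` F" "i \<in> ?G N" "M \<in> fst ` F"
    then have "\<And>j. j \<in> ?G M \<Longrightarrow> dsum_meas \<mu> A (N, i) (M, j) = (if M = N then \<mu> N A i j else 0)"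
      using assms(2) unfolding dsum_meas_def by auto
    then show "(\<Sum>j\<in>?G M. cnj (e (N, i)) * dsum_meas \<mu> A (N, i) (M, j) * e (M, j)) =
      (if M = N then \<Sum>j\<in>?G N. cnj (e (N, i)) * \<mu> N A i j * e (N, j) else 0)"
      by (cases "M = N") simp_all
  qed
  also have "\<dots> = (\<Sum>N\<in>fst ` F. qf_fin (\<mu> N A) (\<lambda>i. e (N, i)) (?G N))"
    unfolding qf_fin_def by (rule sum.cong[OF refl]) (simp add: assms(1))
  finally show ?thesis .
qed

lemma qf_fin_dsum_meas_block_embed:
  assumes "N \<ge> 1"
  shows "qf_fin (dsum_meas \<mu> A) (block_embed N x) (Pair N ` {..<N}) = qf_fin (\<mu> N A) x {..<N}"
  unfolding qf_fin_Pair_image using assms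
  by (intro qf_fin_cong) (auto simp: dsum_meas_def block_embed_def Jsum_def)

lemma qform_dsum_meas_block_embed:
  assumes "N \<ge> 1" "\<And>i. i \<ge> N \<Longrightarrow> x i = 0"
  shows "qform Jsum (dsum_meas \<mu> A) (block_embed N x) = qform {..<N} (\<mu> N A) x"
proof -
  have "qform Jsum (dsum_meas \<mu> A) (block_embed N x) =
        ennreal (Re (qf_fin (dsum_meas \<mu> A) (block_embed N x) (Pair N ` {..<N})))"
    using assms(1) by (intro qform_eq_qf_fin Pair_image_lessThan_subset_Jsum) (auto simp: block_embed_def)
  also have "\<dots> = qform {..<N} (\<mu> N A) x"
    using assms qform_eq_qf_fin[of "{..<N}" "{..<N}" x "\<mu> N A"]
    by (simp add: qf_fin_dsum_meas_block_embed not_less)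
  finally show ?thesis .
qed

section \<open>The Carleson quantity of the direct sum\<close>

lemma Re_qf_fin_Qbox_le:
  assumes "Inorm J M \<le> 1" "arc_param S" "finite F" "F \<subseteq> J"
  shows "Re (qf_fin (M (Qbox S)) x F) \<le> (\<Sum>i\<in>F. (cmod (x i))\<^sup>2)"
proof -
  define s where "s = (\<Sum>i\<in>F. (cmod (x i))\<^sup>2)"
  define W where "W = M (Qbox S)"
  show ?thesis
  proof (cases "s = 0")
    case True
    then have "\<forall>i\<in>F. x i = 0" unfolding s_def using assms(3) by (subst (asm) sum_nonneg_eq_0_iff) auto
    then show ?thesis using True unfolding s_def qf_fin_def by simp
  next
    case False
    moreover have "s \<ge> 0" unfolding s_def by (simp add: sum_nonneg)
    ultimately have "s > 0" by simp
    define e where "e i = (if i \<in> F then x i / of_real (sqrt s) else 0)" for i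
    have e_sq_sum: "((\<lambda>i. (cmod (e i))\<^sup>2) has_sum 1) J"
    proof -
      have J_F: "((\<lambda>i. (cmod (e i))\<^sup>2) has_sum 1) J \<longleftrightarrow> ((\<lambda>i. (cmod (e i))\<^sup>2) has_sum 1) F"
        using assms(4) by (intro has_sum_cong_neutral) (auto simp: e_def)
      have "(\<Sum>i\<in>F. (cmod (e i))\<^sup>2) = (\<Sum>i\<in>F. (cmod (x i))\<^sup>2 / s)"
        using \<open>s > 0\<close> by (intro sum.cong refl) (simp add: e_def norm_divide power_divide)
      also have "\<dots> = 1" using \<open>s > 0\<close> unfolding s_def by (simp add: sum_divide_distrib[symmetric])
      finally show ?thesis unfolding J_F using has_sum_finite[OF assms(3), of "\<lambda>i. (cmod (e i))\<^sup>2"] by simp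
    qed
    have "\<forall>j. j \<notin> J \<longrightarrow> e j = 0" using assms(4) by (auto simp: e_def)
    then have "l2vec J e"
      using e_sq_sum unfolding l2vec_def summable_on_def by blast
    moreover have "l2normsq J e = 1"
      unfolding l2normsq_def using e_sq_sum by (rule infsumI)
    ultimately have "qform J W e \<le> Inorm J M"
      unfolding Inorm_def W_def using assms(2) by (intro SUP_upper2[of S] SUP_upper) auto
    also have "qform J W e = ennreal (Re (qf_fin W e F))"
      using assms(3,4) by (intro qform_eq_qf_fin) (auto simp: e_def)
    finally have "ennreal (Re (qf_fin W e F)) \<le> 1" using assms(1) by (rule order_trans)
    then have "Re (qf_fin W e F) \<le> 1" by simp
    moreover have "qf_fin W e F = qf_fin W x F / of_real s"
    proof -
      have "complex_of_real (sqrt s) * complex_of_real (sqrt s) = complex_of_real s"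
        using \<open>s > 0\<close> by (simp flip: of_real_mult)
      then show ?thesis
        unfolding qf_fin_def sum_divide_distrib using \<open>s > 0\<close>
        by (intro sum.cong refl) (auto simp: e_def field_simps)
    qed
    ultimately show ?thesis
      using \<open>s > 0\<close> unfolding s_def[symmetric] W_def by (simp add: Re_divide_of_real divide_le_eq)
  qed
qed

lemma Inorm_dsum_meas_le_1:
  assumes "\<And>N. N \<ge> 1 \<Longrightarrow> Inorm {..<N} (\<mu> N) \<le> 1"
  shows "Inorm Jsum (dsum_meas \<mu>) \<le> 1"
  unfolding Inorm_def
proof (intro SUP_least)
  fix S e assume S: "S \<in> Collect arc_param" and e: "e \<in> {e. l2vec Jsum e \<and> l2normsq Jsum e = 1}"
  have "Re (qf_fin (dsum_meas \<mu> (Qbox S)) e F) \<le> 1" if F: "finite F" "F \<subseteq> Jsum" for F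
  proof -
    let ?G = "\<lambda>N. {i. (N, i) \<in> F}"
    have "Re (qf_fin (dsum_meas \<mu> (Qbox S)) e F) =
          (\<Sum>N\<in>fst ` F. Re (qf_fin (\<mu> N (Qbox S)) (\<lambda>i. e (N, i)) (?G N)))"
      using qf_fin_dsum_meas[OF F] by simp
    also have "\<dots> \<le> (\<Sum>N\<in>fst ` F. \<Sum>i\<in>?G N. (cmod (e (N, i)))\<^sup>2)"
    proof (intro sum_mono)
      fix N assume "N \<in> fst ` F"
      then have "N \<ge> 1" "?G N \<subseteq> {..<N}" using F by (auto simp: Jsum_def)
      then show "Re (qf_fin (\<mu> N (Qbox S)) (\<lambda>i. e (N, i)) (?G N)) \<le> (\<Sum>i\<in>?G N. (cmod (e (N, i)))\<^sup>2)"
        using Re_qf_fin_Qbox_le[OF assms[OF \<open>N \<ge> 1\<close>]] S finite_Pair_fiber[OF F(1)] by auto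
    qed
    also have "\<dots> = (\<Sum>p\<in>F. (cmod (e p))\<^sup>2)"
      by (rule sum_over_fibers[symmetric, OF F(1)])
    also have "\<dots> \<le> l2normsq Jsum e"
      unfolding l2normsq_def using e F by (intro finite_sum_le_infsum) (auto simp: l2vec_def)
    finally show ?thesis using e by simp
  qed
  then show "qform Jsum (dsum_meas \<mu> (Qbox S)) e \<le> 1"
    using qform_le[of Jsum _ e 1] by simp
qed

lemma Inorm_le_Inorm_dsum_meas:
  assumes "N \<ge> 1"
  shows "Inorm {..<N} (\<mu> N) \<le> Inorm Jsum (dsum_meas \<mu>)"
  unfolding Inorm_def
proof (intro SUP_mono' SUP_least)
  fix S e assume e: "e \<in> {e. l2vec {..<N} e \<and> l2normsq {..<N} e = 1}"
  have e0: "\<And>i. i \<ge> N \<Longrightarrow> e i = 0" using e unfolding l2vec_def by auto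
  have "(\<lambda>i. (cmod (e i))\<^sup>2) summable_on {..<N}" "(\<Sum>\<^sub>\<infinity>i\<in>{..<N}. (cmod (e i))\<^sup>2) = 1"
    using e unfolding l2vec_def l2normsq_def by auto
  then have "((\<lambda>i. (cmod (e i))\<^sup>2) has_sum 1) {..<N}"
    using has_sum_infsum by metis
  then have "((\<lambda>p. (cmod (block_embed N e p))\<^sup>2) has_sum 1) Jsum"
    using has_sum_block_embed[OF assms, of "\<lambda>z. (cmod z)\<^sup>2"] by simp
  moreover have "\<forall>p. p \<notin> Jsum \<longrightarrow> block_embed N e p = 0"
    using assms by (auto simp: block_embed_def Jsum_def)
  ultimately have "block_embed N e \<in> {e. l2vec Jsum e \<and> l2normsq Jsum e = 1}"
    unfolding l2vec_def l2normsq_def summable_on_def by (blast intro: infsumI)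
  moreover have "qform {..<N} (\<mu> N (Qbox S)) e = qform Jsum (dsum_meas \<mu> (Qbox S)) (block_embed N e)"
    using assms e0 by (simp add: qform_dsum_meas_block_embed)
  ultimately show "qform {..<N} (\<mu> N (Qbox S)) e \<le>
      (SUP e\<in>{e. l2vec Jsum e \<and> l2normsq Jsum e = 1}. qform Jsum (dsum_meas \<mu> (Qbox S)) e)"
    by (intro SUP_upper2[of "block_embed N e"]) auto
qed

lemma Inorm_dsum_meas_eq_1:
  assumes "\<And>N. N \<ge> 1 \<Longrightarrow> Inorm {..<N} (\<mu> N) = 1"
  shows "Inorm Jsum (dsum_meas \<mu>) = 1"
proof (rule antisym)
  show "Inorm Jsum (dsum_meas \<mu>) \<le> 1" using assms by (intro Inorm_dsum_meas_le_1) simp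
  show "1 \<le> Inorm Jsum (dsum_meas \<mu>)" using Inorm_le_Inorm_dsum_meas[of 1 \<mu>] assms[of 1] by simp
qed

section \<open>Density representations of operator measures\<close>

lemma set_integral_density_real:
  fixes f :: "'a \<Rightarrow> complex"
  assumes [measurable]: "g \<in> borel_measurable L" "f \<in> borel_measurable L" "A \<in> sets L"
    and "\<And>x. 0 \<le> g x"
  shows "(LINT z:A|density L (\<lambda>x. ennreal (g x)). f z) = (LINT z:A|L. g z *\<^sub>R f z)"
  unfolding set_lebesgue_integral_def
  by (subst integral_density) (auto simp: assms(4) intro!: Bochner_Integration.integral_cong)

lemma finite_measure_real_density:
  assumes "finite_measure L" "finite_measure N" "sets N = sets L" "absolutely_continuous L N"
  obtains D where "D \<in> borel_measurable L" "\<And>x. 0 \<le> D x" "N = density L (\<lambda>x. ennreal (D x))"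
proof -
  interpret finite_measure L by fact
  obtain D where D: "D \<in> borel_measurable L" "AE x in L. RN_deriv L N x = ennreal (D x)" "\<And>x. 0 \<le> D x"
    using real_RN_deriv[OF assms(2,4,3)] by metis
  have "N = density L (RN_deriv L N)" using density_RN_deriv assms by simp
  also have "\<dots> = density L (\<lambda>x. ennreal (D x))"
    by (rule density_cong) (use D in auto)
  finally show thesis using that D by blast
qed

lemma ennreal_suminf_swap: "(\<Sum>i. \<Sum>j. f i j :: ennreal) = (\<Sum>j. \<Sum>i. f i j)"
proof -
  have "(\<Sum>j. \<Sum>i. f i j) = (\<Sum>j. \<integral>\<^sup>+i. f i j \<partial>count_space UNIV)"
    by (simp add: nn_integral_count_space_nat)
  also have "\<dots> = (\<integral>\<^sup>+i. (\<Sum>j. f i j) \<partial>count_space UNIV)"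
    by (rule nn_integral_suminf[symmetric]) simp
  also have "\<dots> = (\<Sum>i. \<Sum>j. f i j)" by (simp add: nn_integral_count_space_nat)
  finally show ?thesis ..
qed

lemma finite_measure_dominating:
  fixes \<nu> :: "nat \<Rightarrow> 'a measure"
  assumes fin: "\<And>n. finite_measure (\<nu> n)" and sets_\<nu>: "\<And>n. sets (\<nu> n) = sets M"
  obtains L where "finite_measure L" "sets L = sets M" "\<forall>n. absolutely_continuous L (\<nu> n)"
proof -
  define a where "a n = (1/2)^n / (1 + measure (\<nu> n) (space M))" for n
  have a_pos: "0 < a n" for n unfolding a_def by (intro divide_pos_pos add_pos_nonneg) auto
  define m where "m A = (\<Sum>n. ennreal (a n) * emeasure (\<nu> n) A)" for A
  define L where "L = measure_of (space M) (sets M) m"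
  have "countably_additive (sets M) m"
    unfolding countably_additive_def
  proof (intro allI impI)
    fix A :: "nat \<Rightarrow> 'a set"
    assume A: "range A \<subseteq> sets M" "disjoint_family A" "\<Union>(range A) \<in> sets M"
    have "(\<Sum>i. m (A i)) = (\<Sum>n. \<Sum>i. ennreal (a n) * emeasure (\<nu> n) (A i))"
      unfolding m_def by (rule ennreal_suminf_swap)
    also have "\<dots> = m (\<Union>(range A))"
      unfolding m_def using A sets_\<nu> by (simp add: suminf_emeasure)
    finally show "(\<Sum>i. m (A i)) = m (\<Union>(range A))" .
  qed
  moreover have "positive (sets M) m" unfolding positive_def m_def by simp
  ultimately have em: "emeasure L A = m A" if "A \<in> sets M" for A
    unfolding L_def using that by (simp add: emeasure_measure_of_sigma[OF sets.sigma_algebra_axioms])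
  have sL: "sets L = sets M" and spL: "space L = space M"
    unfolding L_def by (simp_all add: sets_measure_of[OF sets.space_closed] space_measure_of[OF sets.space_closed])
  have finL: "finite_measure L"
  proof
    have "ennreal (a n) * emeasure (\<nu> n) (space M) \<le> ennreal ((1/2)^n)" for n
    proof -
      let ?c = "measure (\<nu> n) (space M)"
      have "emeasure (\<nu> n) (space M) = ennreal ?c"
        using finite_measure.emeasure_eq_measure[OF fin] by simp
      moreover have "a n * ?c = (1/2)^n * (?c / (1 + ?c))" by (simp add: a_def)
      moreover have "?c / (1 + ?c) \<le> 1"
        using divide_le_eq_1_pos[OF add_pos_nonneg[OF zero_less_one measure_nonneg[of "\<nu> n" "space M"]]] by simp
      ultimately show ?thesis
        using a_pos[of n] mult_left_mono[of "?c / (1 + ?c)" 1 "(1/2)^n"]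
        by (simp add: ennreal_mult[symmetric])
    qed
    then have "emeasure L (space L) \<le> (\<Sum>n. ennreal ((1/2)^n))"
      unfolding spL em[OF sets.top] m_def by (intro suminf_le) auto
    also have "\<dots> = ennreal (\<Sum>n. (1/2)^n)" by (intro suminf_ennreal2) auto
    finally show "emeasure L (space L) \<noteq> \<infinity>" by (auto simp: top_unique)
  qed
  have ac: "absolutely_continuous L (\<nu> n)" for n
    unfolding absolutely_continuous_def
  proof
    fix X assume "X \<in> null_sets L"
    then have X: "X \<in> sets M" "m X = 0" using sL em by (auto simp: null_sets_def)
    have "ennreal (a n) * emeasure (\<nu> n) X \<le> m X"
      unfolding m_def using sum_le_suminf[of "\<lambda>n. ennreal (a n) * emeasure (\<nu> n) X" "{n}"] by auto
    then have "emeasure (\<nu> n) X = 0" using X a_pos[of n] by simp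
    then show "X \<in> null_sets (\<nu> n)" using X sets_\<nu> by (auto simp: null_sets_def)
  qed
  show thesis using ac by (intro that[OF finL sL]) blast
qed

lemma common_dominating_measure:
  fixes \<nu> :: "nat \<Rightarrow> 'a measure"
  assumes fin: "\<And>n. finite_measure (\<nu> n)" and sets_\<nu>: "\<And>n. sets (\<nu> n) = sets M"
  obtains L D where "finite_measure L" "sets L = sets M" "\<And>n. D n \<in> borel_measurable L"
    "\<And>n x. 0 \<le> D n x" "\<And>n. \<nu> n = density L (\<lambda>x. ennreal (D n x))"
proof -
  obtain L where finL: "finite_measure L" and sL: "sets L = sets M"
    and ac: "\<forall>n. absolutely_continuous L (\<nu> n)"
    by (rule finite_measure_dominating[OF fin sets_\<nu>])
  have "\<exists>D. D \<in> borel_measurable L \<and> (\<forall>x. 0 \<le> D x) \<and> \<nu> n = density L (\<lambda>x. ennreal (D x))" for n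
  proof -
    have "sets (\<nu> n) = sets L" using sets_\<nu> sL by simp
    from finite_measure_real_density[OF finL fin this ac[rule_format]] show ?thesis by blast
  qed
  then have "\<forall>n. \<exists>D. D \<in> borel_measurable L \<and> (\<forall>x. 0 \<le> D x) \<and> \<nu> n = density L (\<lambda>x. ennreal (D x))" by blast
  from choice[OF this] obtain D where "\<And>n. D n \<in> borel_measurable L" "\<And>n x. 0 \<le> D n x"
    "\<And>n. \<nu> n = density L (\<lambda>x. ennreal (D n x))"
    by blast
  with finL sL show thesis by (rule that)
qed

lemma opdensity_density:
  assumes d: "opdensity J M (density L (\<lambda>x. ennreal (D x))) W"
    and [measurable]: "D \<in> borel_measurable L" and D_nonneg: "\<And>x. 0 \<le> D x"
  shows "(\<lambda>z. W z p q) \<in> borel_measurable L"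
    and "integrable L (\<lambda>z. D z *\<^sub>R W z p q)"
    and "A \<in> sets L \<Longrightarrow> M A p q = (LINT z:A|L. D z *\<^sub>R W z p q)"
proof -
  have int: "integrable (density L (\<lambda>x. ennreal (D x))) (\<lambda>z. W z p q)"
    and sets_L: "sets L = sets Dmeas"
    and dens: "\<And>A. A \<in> sets Dmeas \<Longrightarrow> M A p q = (LINT z:A|density L (\<lambda>x. ennreal (D x)). W z p q)"
    using d unfolding opdensity_def by auto
  have "measurable (density L (\<lambda>x. ennreal (D x))) borel = measurable L borel"
    by (intro measurable_cong_sets) auto
  then show W_meas[measurable]: "(\<lambda>z. W z p q) \<in> borel_measurable L"
    using borel_measurable_integrable[OF int] by simp
  show "integrable L (\<lambda>z. D z *\<^sub>R W z p q)"
    using int by (subst (asm) integrable_density) (auto simp: D_nonneg)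
  show "A \<in> sets L \<Longrightarrow> M A p q = (LINT z:A|L. D z *\<^sub>R W z p q)"
    using dens sets_L by (simp add: set_integral_density_real D_nonneg)
qed

lemma nn_integral_qf_fin_opdensity_eq:
  assumes d1: "opdensity J M \<nu>1 W1" and d2: "opdensity J M \<nu>2 W2" and B: "finite B"
    and g: "\<And>p. (\<lambda>z. g z p) \<in> borel_measurable Dmeas"
  shows "(\<integral>\<^sup>+z. ennreal (Re (qf_fin (W1 z) (g z) B)) \<partial>\<nu>1) =
         (\<integral>\<^sup>+z. ennreal (Re (qf_fin (W2 z) (g z) B)) \<partial>\<nu>2)"
proof -
  have "finite_measure (if n = 0 then \<nu>1 else \<nu>2)" "sets (if n = 0 then \<nu>1 else \<nu>2) = sets Dmeas"
    for n :: nat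
    using d1 d2 unfolding opdensity_def by auto
  then obtain L :: "complex measure" and D :: "nat \<Rightarrow> complex \<Rightarrow> real"
    where finL: "finite_measure L" and sL: "sets L = sets Dmeas"
    and [measurable]: "\<And>n. D n \<in> borel_measurable L" and D_nonneg: "\<And>n x. 0 \<le> D n x"
    and dens: "\<And>n. (if n = 0 then \<nu>1 else \<nu>2) = density L (\<lambda>x. ennreal (D n x))"
    using common_dominating_measure[of "\<lambda>n. if n = 0 then \<nu>1 else \<nu>2" Dmeas] by blast
  interpret L: finite_measure L by (rule finL)
  define D1 D2 where "D1 = D 0" and "D2 = D 1"
  have [measurable]: "D1 \<in> borel_measurable L" "D2 \<in> borel_measurable L"
    and D1_nonneg: "\<And>x. 0 \<le> D1 x" and D2_nonneg: "\<And>x. 0 \<le> D2 x"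
    unfolding D1_def D2_def by (simp_all add: D_nonneg)
  have \<nu>1: "\<nu>1 = density L (\<lambda>x. ennreal (D1 x))" and \<nu>2: "\<nu>2 = density L (\<lambda>x. ennreal (D2 x))"
    unfolding D1_def D2_def using dens[of 0] dens[of 1] by simp_all
  note d1' = opdensity_density[OF d1[unfolded \<nu>1]] and d2' = opdensity_density[OF d2[unfolded \<nu>2]]
  have [measurable]: "\<And>p. (\<lambda>z. g z p) \<in> borel_measurable L"
    using g sL measurable_cong_sets by metis
  have "AE z in L. D1 z *\<^sub>R W1 z p q = D2 z *\<^sub>R W2 z p q" for p q
    using d1'(2,3) d2'(2,3) sL D1_nonneg D2_nonneg
    by (intro L.density_unique_banach) auto
  then have AE_block: "AE z in L. \<forall>p\<in>B. \<forall>q\<in>B.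
      complex_of_real (D1 z) * W1 z p q = complex_of_real (D2 z) * W2 z p q"
    using B by (intro AE_finite_allI) (simp_all add: scaleR_conv_of_real)
  have "(\<integral>\<^sup>+z. ennreal (Re (qf_fin (W1 z) (g z) B)) \<partial>\<nu>1) =
        (\<integral>\<^sup>+z. ennreal (D1 z) * ennreal (Re (qf_fin (W1 z) (g z) B)) \<partial>L)"
    unfolding \<nu>1 using d1'(1) by (intro nn_integral_density qf_fin_measurable) (auto simp: D1_nonneg)
  also have "\<dots> = (\<integral>\<^sup>+z. ennreal (Re (qf_fin (\<lambda>p q. complex_of_real (D1 z) * W1 z p q) (g z) B)) \<partial>L)"
    by (intro nn_integral_cong) (simp add: qf_fin_scale ennreal_mult' D1_nonneg)
  also have "\<dots> = (\<integral>\<^sup>+z. ennreal (Re (qf_fin (\<lambda>p q. complex_of_real (D2 z) * W2 z p q) (g z) B)) \<partial>L)"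
    by (intro nn_integral_cong_AE, use AE_block in eventually_elim)
       (auto intro!: arg_cong[where f="\<lambda>x. ennreal (Re x)"] qf_fin_cong)
  also have "\<dots> = (\<integral>\<^sup>+z. ennreal (D2 z) * ennreal (Re (qf_fin (W2 z) (g z) B)) \<partial>L)"
    by (intro nn_integral_cong) (simp add: qf_fin_scale ennreal_mult' D2_nonneg)
  also have "\<dots> = (\<integral>\<^sup>+z. ennreal (Re (qf_fin (W2 z) (g z) B)) \<partial>\<nu>2)"
    unfolding \<nu>2 using d2'(1) by (intro nn_integral_density[symmetric] qf_fin_measurable) (auto simp: D2_nonneg)
  finally show ?thesis .
qed

lemma opL2_eq_nn_integral:
  assumes d: "opdensity J M \<nu> W" and B: "finite B" "B \<subseteq> J" and g0: "\<And>z p. p \<notin> B \<Longrightarrow> g z p = 0"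
    and g: "\<And>p. (\<lambda>z. g z p) \<in> borel_measurable Dmeas"
  shows "opL2 J M g = (\<integral>\<^sup>+z. ennreal (Re (qf_fin (W z) (g z) B)) \<partial>\<nu>)"
proof -
  have qf: "\<And>W z. qform J W (g z) = ennreal (Re (qf_fin W (g z) B))"
    using B g0 by (rule qform_eq_qf_fin)
  show ?thesis
    unfolding opL2_def qf
  proof (rule the_equality)
    show "\<forall>\<nu>' W'. opdensity J M \<nu>' W' \<longrightarrow> (\<integral>\<^sup>+z. ennreal (Re (qf_fin (W z) (g z) B)) \<partial>\<nu>) =
        (\<integral>\<^sup>+z. ennreal (Re (qf_fin (W' z) (g z) B)) \<partial>\<nu>')"
      using nn_integral_qf_fin_opdensity_eq[where g=g, OF d _ B(1) g] by blast
  qed (use d in blast)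
qed

lemma opL2_no_opdensity: "\<not> (\<exists>\<nu> W. opdensity J M \<nu> W) \<Longrightarrow> opL2 J M g = (THE q::ennreal. True)"
  unfolding opL2_def by simp

lemma opdensity_dsum_meas_block:
  assumes d: "opdensity Jsum (dsum_meas \<mu>) \<nu> W" and N: "N \<ge> 1" and om: "is_opmeasure {..<N} (\<mu> N)"
  shows "opdensity {..<N} (\<mu> N) \<nu> (\<lambda>z i j. if i < N \<and> j < N then W z (N, i) (N, j) else 0)"
    (is "opdensity _ _ _ ?W")
proof -
  have psd: "\<And>z. z \<in> space \<nu> \<Longrightarrow> psd_mat Jsum (W z)"
    and int: "\<And>p q. integrable \<nu> (\<lambda>z. W z p q)"
    and dens: "\<And>A p q. A \<in> sets Dmeas \<Longrightarrow> dsum_meas \<mu> A p q = (LINT z:A|\<nu>. W z p q)"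
    using d unfolding opdensity_def by auto
  have psd_N: "\<And>A. A \<in> sets Dmeas \<Longrightarrow> psd_mat {..<N} (\<mu> N A)"
    using om unfolding is_opmeasure_def bounded_psd_def by auto
  have "psd_mat {..<N} (?W z)" if z: "z \<in> space \<nu>" for z
    unfolding psd_mat_def
  proof (intro conjI allI impI)
    fix x F assume F: "finite F \<and> F \<subseteq> {..<N}"
    have "qf_fin (?W z) x F = qf_fin (W z) (\<lambda>p. x (snd p)) (Pair N ` F)"
      unfolding qf_fin_Pair_image using F by (intro qf_fin_cong) auto
    moreover have "Pair N ` F \<subseteq> Jsum" using F Pair_image_lessThan_subset_Jsum[OF N] by auto
    ultimately show "qf_fin (?W z) x F \<in> \<real>" "0 \<le> Re (qf_fin (?W z) x F)"
      using psd[OF z] F unfolding psd_mat_def by auto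
  qed auto
  moreover have "\<mu> N A i j = (LINT z:A|\<nu>. ?W z i j)" if A: "A \<in> sets Dmeas" for A i j
  proof (cases "i < N \<and> j < N")
    case True
    then have "\<mu> N A i j = dsum_meas \<mu> A (N, i) (N, j)" using N by (simp add: dsum_meas_def Jsum_def)
    then show ?thesis using dens[OF A] True by simp
  next
    case False
    then show ?thesis using psd_N[OF A] unfolding psd_mat_def set_lebesgue_integral_def by auto
  qed
  moreover have "integrable \<nu> (\<lambda>z. ?W z i j)" for i j
    using int[of "(N, i)" "(N, j)"] by (cases "i < N \<and> j < N") auto
  ultimately show ?thesis using d unfolding opdensity_def by blast
qed

lemma opL2_dsum_meas_block_embed:
  assumes d: "opdensity Jsum (dsum_meas \<mu>) \<nu> W" and N: "N \<ge> 1" and om: "is_opmeasure {..<N} (\<mu> N)"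
    and gm: "\<And>i. (\<lambda>w. g w i) \<in> borel_measurable Dmeas" and g0: "\<And>w i. i \<ge> N \<Longrightarrow> g w i = 0"
  shows "opL2 Jsum (dsum_meas \<mu>) (\<lambda>w. block_embed N (g w)) = opL2 {..<N} (\<mu> N) g"
proof -
  let ?W = "\<lambda>z i j. if i < N \<and> j < N then W z (N, i) (N, j) else 0"
  have "(\<lambda>w. block_embed N (g w) p) \<in> borel_measurable Dmeas" for p
    using gm by (simp add: block_embed_def)
  then have "opL2 Jsum (dsum_meas \<mu>) (\<lambda>w. block_embed N (g w)) =
        (\<integral>\<^sup>+z. ennreal (Re (qf_fin (W z) (block_embed N (g z)) (Pair N ` {..<N}))) \<partial>\<nu>)"
    by (intro opL2_eq_nn_integral[OF d _ Pair_image_lessThan_subset_Jsum[OF N]]) (auto simp: block_embed_def)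
  also have "\<dots> = (\<integral>\<^sup>+z. ennreal (Re (qf_fin (?W z) (g z) {..<N})) \<partial>\<nu>)"
    unfolding qf_fin_Pair_image by (intro nn_integral_cong arg_cong[where f="\<lambda>x. ennreal (Re x)"] qf_fin_cong)
      (auto simp: block_embed_def)
  also have "\<dots> = opL2 {..<N} (\<mu> N) g"
    by (rule opL2_eq_nn_integral[OF opdensity_dsum_meas_block[OF d N om], symmetric])
      (auto simp: g0 gm not_less)
  finally show ?thesis .
qed

lemma ennreal_suminf_const_eq_self:
  assumes "(\<Sum>i::nat. c) = (c::ennreal)" "c \<noteq> \<infinity>"
  shows "c = 0"
proof -
  have "(\<Sum>i\<in>{0,1::nat}. c) \<le> (\<Sum>i. c)" by (intro sum_le_suminf) auto
  then have "c + c \<le> c + 0" using assms(1) by (simp add: mult_2[symmetric])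
  then show ?thesis using ennreal_add_left_cancel_le[of c c 0] assms(2) by simp
qed

lemma finite_measure_of_countably_additive:
  fixes m :: "'a set \<Rightarrow> ennreal"
  assumes ca: "countably_additive (sets M) m" and fin: "\<And>A. m A \<noteq> top"
  defines "\<nu> \<equiv> measure_of (space M) (sets M) m"
  shows "finite_measure \<nu>" "sets \<nu> = sets M" "\<And>A. A \<in> sets M \<Longrightarrow> emeasure \<nu> A = m A"
proof -
  have "m {} = 0"
  proof (rule ennreal_suminf_const_eq_self)
    have "(\<Sum>i. m ((\<lambda>_. {}) i)) = m (\<Union>(range (\<lambda>_::nat. {})))"
      using ca unfolding countably_additive_def by (auto simp: disjoint_family_on_def)
    then show "(\<Sum>i::nat. m {}) = m {}" by simp
  qed (use fin in simp)
  then show em: "\<And>A. A \<in> sets M \<Longrightarrow> emeasure \<nu> A = m A"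
    unfolding \<nu>_def by (intro emeasure_measure_of_sigma[OF sets.sigma_algebra_axioms _ ca]) (simp add: positive_def)
  show "sets \<nu> = sets M"
    unfolding \<nu>_def by (simp add: sets_measure_of[OF sets.space_closed])
  have "space \<nu> = space M"
    unfolding \<nu>_def by (simp add: space_measure_of[OF sets.space_closed])
  then show "finite_measure \<nu>"
    by (intro finite_measureI) (simp add: em fin)
qed

text \<open>On \<open>\<complex>\<^sup>1\<close> an operator measure is a scalar measure \<open>m\<close>, with constant density 1
  with respect to \<open>m\<close> itself.\<close>

lemma opdensity_lessThan_1_exists:
  fixes M :: "complex set \<Rightarrow> nat \<Rightarrow> nat \<Rightarrow> complex"
  assumes om: "is_opmeasure {..<1} M"
  shows "\<exists>\<nu> W. opdensity {..<1} M \<nu> W"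
proof -
  have psd: "\<And>A. A \<in> sets Dmeas \<Longrightarrow> psd_mat {..<1} (M A)"
    using om unfolding is_opmeasure_def bounded_psd_def by auto
  have qf0: "\<And>W. qf_fin W (\<lambda>_. 1) {0} = W 0 0" by (simp add: qf_fin_def)
  define m where "m A = ennreal (Re (M A 0 0))" for A
  have "countably_additive (sets Dmeas) (\<lambda>A. ennreal (Re (qf_fin (M A) (\<lambda>_. 1) {0})))"
    using om unfolding is_opmeasure_def by auto
  then have ca: "countably_additive (sets Dmeas) m" unfolding m_def qf0 .
  have M00: "M A 0 0 = complex_of_real (Re (M A 0 0)) \<and> 0 \<le> Re (M A 0 0)" if "A \<in> sets Dmeas" for A
  proof -
    have "qf_fin (M A) (\<lambda>_. 1) {0} \<in> \<real> \<and> 0 \<le> Re (qf_fin (M A) (\<lambda>_. 1) {0})"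
      using psd[OF that] unfolding psd_mat_def by auto
    then show ?thesis unfolding qf0 by (auto simp: complex_is_Real_iff complex_eq_iff)
  qed
  define \<nu> where "\<nu> = measure_of (space Dmeas) (sets Dmeas) m"
  have fin: "finite_measure \<nu>" and s\<nu>: "sets \<nu> = sets Dmeas"
    and em: "\<And>A. A \<in> sets Dmeas \<Longrightarrow> emeasure \<nu> A = m A"
    using finite_measure_of_countably_additive[OF ca] unfolding \<nu>_def m_def by auto
  define W where "W z i j = (if i = 0 \<and> j = 0 then (1::complex) else 0)" for z :: complex and i j :: nat
  have "psd_mat {..<1} (W z)" for z
    unfolding psd_mat_def
  proof (intro conjI allI impI)
    fix x F assume "finite F \<and> F \<subseteq> {..<(1::nat)}"
    then have "F = {} \<or> F = {0}" by auto
    moreover have "qf_fin (W z) x {0} = complex_of_real ((cmod (x 0))\<^sup>2)"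
      using complex_norm_square[of "x 0"] by (simp add: qf_fin_def W_def mult.commute)
    ultimately have "qf_fin (W z) x F = 0 \<or> qf_fin (W z) x F = complex_of_real ((cmod (x 0))\<^sup>2)"
      by (auto simp: qf_fin_def)
    then show "qf_fin (W z) x F \<in> \<real>" "0 \<le> Re (qf_fin (W z) x F)" by auto
  qed (auto simp: W_def)
  moreover have "integrable \<nu> (\<lambda>z. W z i j)" for i j
    using finite_measure.integrable_const[OF fin, of "1::complex"] by (simp add: W_def)
  moreover have "M A i j = (LINT z:A|\<nu>. W z i j)" if A: "A \<in> sets Dmeas" for A i j
  proof (cases "i = 0 \<and> j = 0")
    case True
    have "(LINT z:A|\<nu>. W z i j) = measure \<nu> A *\<^sub>R 1"
      using True A s\<nu> em by (simp add: W_def set_integral_const m_def)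
    also have "measure \<nu> A = Re (M A 0 0)"
      using em[OF A] M00[OF A] by (simp add: measure_def m_def)
    finally show ?thesis using True M00[OF A] by (simp add: scaleR_conv_of_real)
  next
    case False
    then show ?thesis using psd[OF A] unfolding psd_mat_def set_lebesgue_integral_def by (auto simp: W_def)
  qed
  ultimately have "opdensity {..<1} M \<nu> W"
    unfolding opdensity_def using s\<nu> fin by blast
  then show ?thesis by blast
qed

lemma psd_mat_scale:
  assumes "psd_mat J V" "0 \<le> c"
  shows "psd_mat J (\<lambda>i j. complex_of_real c * V i j)"
  using assms unfolding psd_mat_def qf_fin_scale by (auto intro: Reals_mult)

lemma psd_mat_dsum_meas:
  assumes "\<And>N. N \<ge> 1 \<Longrightarrow> psd_mat {..<N} (\<mu> N A)"
  shows "psd_mat Jsum (dsum_meas \<mu> A)"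
  unfolding psd_mat_def
proof (intro conjI allI impI)
  fix x F assume F: "finite F \<and> F \<subseteq> Jsum"
  have "N \<ge> 1 \<and> {i. (N, i) \<in> F} \<subseteq> {..<N} \<and> finite {i. (N, i) \<in> F}" if "N \<in> fst ` F" for N
    using F finite_Pair_fiber[of F] that by (force simp: Jsum_def)
  then have "qf_fin (\<mu> N A) (\<lambda>i. x (N, i)) {i. (N, i) \<in> F} \<in> \<real> \<and>
          0 \<le> Re (qf_fin (\<mu> N A) (\<lambda>i. x (N, i)) {i. (N, i) \<in> F})" if "N \<in> fst ` F" for N
    using assms that unfolding psd_mat_def by blast
  then show "qf_fin (dsum_meas \<mu> A) x F \<in> \<real>" "0 \<le> Re (qf_fin (dsum_meas \<mu> A) x F)"
    unfolding qf_fin_dsum_meas[OF conjunct1[OF F] conjunct2[OF F]] Re_sum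
    by (auto intro!: sum_in_Reals sum_nonneg)
qed (auto simp: dsum_meas_def)

lemma opdensity_dsum_meas_exists:
  assumes ex: "\<And>N. N \<ge> 1 \<Longrightarrow> \<exists>\<nu> W. opdensity {..<N} (\<mu> N) \<nu> W"
  shows "\<exists>\<nu> W. opdensity Jsum (dsum_meas \<mu>) \<nu> W"
proof -
  have "\<forall>N. \<exists>\<nu> W. opdensity {..<max 1 N} (\<mu> (max 1 N)) \<nu> W" using ex by simp
  then obtain \<nu>s Ws where d': "\<And>N. opdensity {..<max 1 N} (\<mu> (max 1 N)) (\<nu>s N) (Ws N)"
    by metis
  have d: "opdensity {..<N} (\<mu> N) (\<nu>s N) (Ws N)" if "N \<ge> 1" for N
    using d'[of N] that by (simp add: max_def)
  have "finite_measure (\<nu>s N)" "sets (\<nu>s N) = sets Dmeas" for N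
    using d'[of N] unfolding opdensity_def by auto
  then obtain L :: "complex measure" and D :: "nat \<Rightarrow> complex \<Rightarrow> real"
    where finL: "finite_measure L" and sL: "sets L = sets Dmeas"
    and D[measurable]: "\<And>N. D N \<in> borel_measurable L" and Dnn: "\<And>N x. 0 \<le> D N x"
    and dens: "\<And>N. \<nu>s N = density L (\<lambda>x. ennreal (D N x))"
    using common_dominating_measure[of \<nu>s Dmeas] by blast
  \<comment> \<open>block diagonal with blocks \<open>D\<^sub>N(z) W\<^sub>N(z)\<close>; the set argument of \<^const>\<open>dsum_meas\<close> is a dummy\<close>
  define W where "W z = dsum_meas (\<lambda>N _ i j. complex_of_real (D N z) * Ws N z i j) {}" for z
  note d_weighted = opdensity_density[OF d[unfolded dens] D Dnn]
  have "psd_mat Jsum (W z)" if z: "z \<in> space L" for z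
    unfolding W_def
  proof (intro psd_mat_dsum_meas psd_mat_scale)
    fix N :: nat assume "N \<ge> 1"
    moreover have "space (\<nu>s N) = space L" using d'[of N] sL sets_eq_imp_space_eq
      unfolding opdensity_def by metis
    ultimately show "psd_mat {..<N} (Ws N z)" using d z unfolding opdensity_def by blast
  qed (rule Dnn)
  moreover have W_dens: "integrable L (\<lambda>z. W z p q) \<and> dsum_meas \<mu> A p q = (LINT z:A|L. W z p q)"
    if A: "A \<in> sets Dmeas" for A p q
  proof (cases "p \<in> Jsum \<and> q \<in> Jsum \<and> fst p = fst q")
    case True
    then have N: "fst p \<ge> 1" by (auto simp: Jsum_def)
    then have "integrable L (\<lambda>z. D (fst p) z *\<^sub>R Ws (fst p) z (snd p) (snd q))"
      and "\<mu> (fst p) A (snd p) (snd q) = (LINT z:A|L. D (fst p) z *\<^sub>R Ws (fst p) z (snd p) (snd q))"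
      using d_weighted(2,3)[OF N] A sL by auto
    then show ?thesis using True by (simp add: W_def dsum_meas_def scaleR_conv_of_real)
  next
    case False
    then have "(\<lambda>z. W z p q) = (\<lambda>z. 0)" "dsum_meas \<mu> A p q = 0" by (auto simp: W_def dsum_meas_def)
    then show ?thesis by (simp add: set_lebesgue_integral_def)
  qed
  moreover have "integrable L (\<lambda>z. W z p q)" for p q
    using W_dens[OF sets.top] by blast
  ultimately have "opdensity Jsum (dsum_meas \<mu>) L W"
    unfolding opdensity_def using finL sL by blast
  then show ?thesis by blast
qed

lemma borel_measurable_Arg[measurable]: "Arg \<in> borel_measurable borel"
proof -
  have [measurable]: "(\<lambda>z. if z \<in> - \<real>\<^sub>\<le>\<^sub>0 then Arg z else pi) \<in> borel_measurable borel"
    by (rule borel_measurable_continuous_on_if)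
       (auto intro: continuous_on_Arg continuous_on_const borel_open)
  have Arg_eq: "Arg = (\<lambda>z. if z = 0 then 0 else (if z \<in> - \<real>\<^sub>\<le>\<^sub>0 then Arg z else pi))"
  proof
    fix z :: complex
    show "Arg z = (if z = 0 then 0 else (if z \<in> - \<real>\<^sub>\<le>\<^sub>0 then Arg z else pi))"
    proof (cases "z = 0")
      case False
      then show ?thesis by (auto simp: complex_nonpos_Reals_iff Arg_eq_pi complex_eq_iff)
    qed (simp add: Arg_zero)
  qed
  show ?thesis by (subst Arg_eq) measurable
qed

lemma Pext_measurable:
  assumes f: "(\<lambda>t. f t j) \<in> borel_measurable (restrict_space lborel {0..1})"
  shows "(\<lambda>w. Pext f w j) \<in> borel_measurable Dmeas"
proof -
  have [measurable]: "(\<lambda>t. indicator {0..1} t *\<^sub>R f t j) \<in> borel_measurable lborel"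
    using f by (subst borel_measurable_restrict_space_iff[symmetric]) auto
  have "(\<lambda>w. w) \<in> measurable Dmeas borel"
    unfolding Dmeas_def by (rule measurable_restrict_space1) simp
  then have "(\<lambda>x. x) \<in> measurable (Dmeas \<Otimes>\<^sub>M lborel) (borel \<Otimes>\<^sub>M lborel)"
    by (subst measurable_pair_iff) (simp add: comp_def measurable_compose[OF measurable_fst])
  moreover have "(\<lambda>(w, t). complex_of_real (Pker (cmod w) (Arg w / (2 * pi) - t)) *
         (indicator {0..1} t *\<^sub>R f t j)) \<in> borel_measurable (borel \<Otimes>\<^sub>M lborel)"
    unfolding Pker_def by measurable
  ultimately have "(\<lambda>(w, t). complex_of_real (Pker (cmod w) (Arg w / (2 * pi) - t)) *
         (indicator {0..1} t *\<^sub>R f t j)) \<in> borel_measurable (Dmeas \<Otimes>\<^sub>M lborel)"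
    by (rule measurable_compose)
  then have "(\<lambda>w. \<integral>t. complex_of_real (Pker (cmod w) (Arg w / (2 * pi) - t)) *
         (indicator {0..1} t *\<^sub>R f t j) \<partial>lborel) \<in> borel_measurable Dmeas"
    by (rule lborel.borel_measurable_lebesgue_integral)
  moreover have "(\<lambda>w. Pext f w j) = (\<lambda>w. \<integral>t. complex_of_real (Pker (cmod w) (Arg w / (2 * pi) - t)) *
         (indicator {0..1} t *\<^sub>R f t j) \<partial>lborel)"
    unfolding Pext_def set_lebesgue_integral_def
    by (intro ext Bochner_Integration.integral_cong) (auto simp: indicator_def)
  ultimately show ?thesis by simp
qed

lemma Pext_block_embed: "Pext (\<lambda>t. block_embed N (f t)) = (\<lambda>w. block_embed N (Pext f w))"
  by (intro ext) (auto simp: Pext_def block_embed_def)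

lemma H2_zero: "H2 J (\<lambda>t j. 0)"
  unfolding H2_def by simp

lemma H2normsq_zero: "H2normsq J (\<lambda>t j. 0) = 0"
  unfolding H2normsq_def by simp

lemma H2_block_embed:
  fixes f :: "real \<Rightarrow> nat \<Rightarrow> complex"
  assumes N: "N \<ge> 1" and f: "H2 {..<N} f"
  shows "H2 Jsum (\<lambda>t. block_embed N (f t))"
    and "H2normsq Jsum (\<lambda>t. block_embed N (f t)) = H2normsq {..<N} f"
proof -
  have sq_sum: "(\<Sum>\<^sub>\<infinity>p\<in>Jsum. ennreal ((cmod (block_embed N (f t) p))\<^sup>2)) =
      (\<Sum>\<^sub>\<infinity>j\<in>{..<N}. ennreal ((cmod (f t j))\<^sup>2))" for t
    using infsum_block_embed[OF N, of "\<lambda>z. ennreal ((cmod z)\<^sup>2)"] by simp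
  show "H2normsq Jsum (\<lambda>t. block_embed N (f t)) = H2normsq {..<N} f"
    unfolding H2normsq_def sq_sum ..
  show "H2 Jsum (\<lambda>t. block_embed N (f t))"
    unfolding H2_def
  proof (intro conjI allI impI)
    fix j :: "nat \<times> nat"
    show "(\<lambda>t. block_embed N (f t) j) \<in> borel_measurable (restrict_space lborel {0..1})"
      using f unfolding H2_def by (cases "fst j = N \<and> snd j < N") (auto simp: block_embed_def)
  next
    fix t and j :: "nat \<times> nat" assume "j \<notin> Jsum"
    then show "block_embed N (f t) j = 0" using N by (auto simp: block_embed_def Jsum_def)
  next
    show "(\<integral>\<^sup>+ t. (\<Sum>\<^sub>\<infinity>j\<in>Jsum. ennreal ((cmod (block_embed N (f t) j))\<^sup>2)) \<partial>(restrict_space lborel {0..1})) < \<infinity>"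
      using f unfolding H2_def sq_sum by blast
  next
    fix n :: int and j :: "nat \<times> nat" assume "n < 0"
    then show "(LINT t:{0..1}|lborel. block_embed N (f t) j * exp (- 2 * pi * \<i> * of_int n * of_real t)) = 0"
      using f unfolding H2_def by (cases "fst j = N \<and> snd j < N") (auto simp: block_embed_def)
  qed
qed

section \<open>Unboundedness of the extension for the direct sum\<close>

lemma ex_nat_sqrt_ln_gt:
  fixes c K :: real
  assumes "c > 0"
  shows "\<exists>N::nat. N \<ge> 1 \<and> K < c * sqrt (ln (real N))"
proof -
  obtain n :: nat where n: "exp ((K/c)\<^sup>2 + 1) < real n" using reals_Archimedean2 by blast
  have "1 < exp ((K/c)\<^sup>2 + 1)" by (simp add: add_nonneg_pos)
  then have n1: "1 < real n" using n by linarith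
  have "ln (exp ((K/c)\<^sup>2 + 1)) < ln (real n)" using n n1 by (subst ln_less_cancel_iff) auto
  then have "sqrt ((K/c)\<^sup>2) < sqrt (ln (real n))" by (intro real_sqrt_less_mono) simp
  then have "K/c < sqrt (ln (real n))"
    using real_sqrt_abs[of "K/c"] abs_ge_self[of "K/c"] by linarith
  then have "K < c * sqrt (ln (real n))" using assms by (simp add: divide_less_eq mult.commute)
  then show ?thesis using n1 by (intro exI[of _ n]) auto
qed

lemma opL2_block_le_of_dsum_bounded:
  assumes d: "opdensity Jsum (dsum_meas \<mu>) \<nu> W" and N: "N \<ge> 1" and om: "is_opmeasure {..<N} (\<mu> N)"
    and bnd: "\<And>F. H2 Jsum F \<Longrightarrow> opL2 Jsum (dsum_meas \<mu>) (Pext F) \<le> ennreal C * H2normsq Jsum F"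
    and f: "H2 {..<N} f"
  shows "opL2 {..<N} (\<mu> N) (Pext f) \<le> ennreal C * H2normsq {..<N} f"
proof -
  have "opL2 Jsum (dsum_meas \<mu>) (Pext (\<lambda>t. block_embed N (f t))) = opL2 {..<N} (\<mu> N) (Pext f)"
    unfolding Pext_block_embed using f
    by (intro opL2_dsum_meas_block_embed[OF d N om] Pext_measurable) (auto simp: H2_def Pext_def)
  then show ?thesis
    using bnd[OF H2_block_embed(1)[OF N f]] H2_block_embed(2)[OF N f] by simp
qed

text \<open>If the direct sum has no density representation, \<^const>\<open>opL2\<close> is the same
  unspecified constant for every function.  Testing the bound on the zero function
  forces that constant to be 0, which the blocks \<open>N \<ge> 2\<close> exclude for themselves,
  while the block \<open>N = 1\<close> always has a density.  So all blocks have densities, and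
  so does their sum.\<close>

lemma ex_opdensity_dsum_meas_if_bounded:
  assumes om: "\<And>N. N \<ge> 1 \<Longrightarrow> is_opmeasure {..<N} (\<mu> N)"
    and nonzero: "\<And>N. N \<ge> 2 \<Longrightarrow> \<exists>f. opL2 {..<N} (\<mu> N) (Pext f) \<noteq> 0"
    and bnd: "\<And>F. H2 Jsum F \<Longrightarrow> opL2 Jsum (dsum_meas \<mu>) (Pext F) \<le> ennreal C * H2normsq Jsum F"
  shows "\<exists>\<nu> W. opdensity Jsum (dsum_meas \<mu>) \<nu> W"
proof (rule ccontr)
  assume no_dens: "\<not> (\<exists>\<nu> W. opdensity Jsum (dsum_meas \<mu>) \<nu> W)"
  have "opL2 Jsum (dsum_meas \<mu>) (Pext (\<lambda>t j. 0)) \<le> 0"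
    using bnd[OF H2_zero] by (simp add: H2normsq_zero)
  then have undefined_0: "(THE q::ennreal. True) = 0"
    by (simp add: opL2_no_opdensity[OF no_dens])
  have "\<exists>\<nu> W. opdensity {..<N} (\<mu> N) \<nu> W" if "N \<ge> 1" for N
  proof (cases "N = 1")
    case True
    then show ?thesis using opdensity_lessThan_1_exists[OF om[of 1]] by simp
  next
    case False
    with that obtain f where "opL2 {..<N} (\<mu> N) (Pext f) \<noteq> 0" using nonzero[of N] by auto
    then show ?thesis using opL2_no_opdensity undefined_0 by metis
  qed
  then show False using opdensity_dsum_meas_exists no_dens by blast
qed

theorem corollary4:
  fixes c :: real and \<mu> :: "nat \<Rightarrow> complex set \<Rightarrow> nat \<Rightarrow> nat \<Rightarrow> complex"
  assumes "c > 0"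
    and "\<And>N. N \<ge> 1 \<Longrightarrow> is_opmeasure {..<N} (\<mu> N)"
    and "\<And>N. N \<ge> 1 \<Longrightarrow> Inorm {..<N} (\<mu> N) = 1"
    and "\<And>N K. N \<ge> 1 \<Longrightarrow> 0 \<le> K \<Longrightarrow> K < c * sqrt (ln (real N)) \<Longrightarrow>
           \<not> (\<forall>f. H2 {..<N} f \<longrightarrow>
                  opL2 {..<N} (\<mu> N) (Pext f) \<le> ennreal (K\<^sup>2) * H2normsq {..<N} f)"
  shows "Inorm Jsum (dsum_meas \<mu>) = 1 \<and>
         \<not> (\<exists>C::real. \<forall>f. H2 Jsum f \<longrightarrow>
                opL2 Jsum (dsum_meas \<mu>) (Pext f) \<le> ennreal C * H2normsq Jsum f)"
proof
  show "Inorm Jsum (dsum_meas \<mu>) = 1" using assms(3) by (rule Inorm_dsum_meas_eq_1)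
  show "\<not> (\<exists>C::real. \<forall>f. H2 Jsum f \<longrightarrow>
                opL2 Jsum (dsum_meas \<mu>) (Pext f) \<le> ennreal C * H2normsq Jsum f)"
  proof
    assume "\<exists>C::real. \<forall>f. H2 Jsum f \<longrightarrow> opL2 Jsum (dsum_meas \<mu>) (Pext f) \<le> ennreal C * H2normsq Jsum f"
    then obtain C where bnd: "\<And>f. H2 Jsum f \<Longrightarrow> opL2 Jsum (dsum_meas \<mu>) (Pext f) \<le> ennreal C * H2normsq Jsum f"
      by blast
    have "\<exists>f. opL2 {..<N} (\<mu> N) (Pext f) \<noteq> 0" if "N \<ge> 2" for N
      using assms(4)[of N 0] assms(1) that by auto
    then obtain \<nu> W where d: "opdensity Jsum (dsum_meas \<mu>) \<nu> W"
      using ex_opdensity_dsum_meas_if_bounded[OF assms(2) _ bnd] by blast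
    define K where "K = sqrt (max C 0)"
    obtain N :: nat where N: "N \<ge> 1" "K < c * sqrt (ln (real N))" using ex_nat_sqrt_ln_gt[OF assms(1)] by blast
    then obtain f where f: "H2 {..<N} f" and unbounded: "\<not> opL2 {..<N} (\<mu> N) (Pext f) \<le> ennreal (K\<^sup>2) * H2normsq {..<N} f"
      using assms(4)[OF N(1) _ N(2)] by (auto simp: K_def)
    have "opL2 {..<N} (\<mu> N) (Pext f) \<le> ennreal C * H2normsq {..<N} f"
      by (rule opL2_block_le_of_dsum_bounded[OF d N(1) assms(2)[OF N(1)] bnd f])
    also have "\<dots> \<le> ennreal (K\<^sup>2) * H2normsq {..<N} f"
      unfolding K_def by (intro mult_right_mono ennreal_leI) auto
    finally show False using unbounded by simp
  qed
qed

end
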